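(* For every $m\ge1$, $\mathrm{PBTD}(\mathrm{QR}^1_{\infty,m})=2$. If $z\ge2$, then $\mathrm{PBTD}(\mathrm{QR}^z_{\infty,m})\ge2$.
   Context: Fix a countably infinite set $X$ of variables and an alphabet $\Sigma$ (finite or countably infinite, disjoint from $X$), $z=|\Sigma|$. A pattern is a nonempty finite string over $X\cup\Sigma$. A substitution is a morphism $h:(X\cup\Sigma)^*\to\Sigma^*$ fixing letters; $L(\pi)$ (erasing pattern language) is the set of all $h(\pi)$; patterns with equal languages are identified. A pattern is $m$-quasi-regular if every variable occurring in it occurs exactly $m$ times (patterns without variables are included); $\mathrm{QR}^z_{\infty,m}$ is the class of $m$-quasi-regular patterns over an alphabet of size $z$. A labelled example is $(w,\pm)$ with $w\in\Sigma^*$; a teaching set for $\pi$ w.r.t. a class $\Pi$ is a set $T$ of labelled examples consistent with $\pi$ such that every $\tau\in\Pi$ consistent with $T$ has $L(\tau)=L(\pi)$. For a strict partial order $\prec$ on $\Pi$, a teaching set for $\pi$ w.r.t. $(\Pi,\prec)$ is a teaching set for $\pi$ w.r.t. $\Pi\setminus\{\pi':\pi'\prec\pi\}$; $\mathrm{PBTD}(\Pi,\prec)$ is the supremum over $\pi\in\Pi$ of the minimum size of such sets, and $\mathrm{PBTD}(\Pi)=\inf_\prec\mathrm{PBTD}(\Pi,\prec)$. *)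

theory Defs
  imports Main "HOL-Library.Extended_Nat" "HOL-Library.Countable_Set"
begin

text \<open>Variables are natural numbers (Inl x), letters are elements of the alphabet
  Sig of type 'a (Inr a). A pattern is a nonempty list over this disjoint union.\<close>

definition is_pattern :: "'a set \<Rightarrow> (nat + 'a) list \<Rightarrow> bool" where
  "is_pattern Sig p \<longleftrightarrow> p \<noteq> [] \<and> (\<forall>a. Inr a \<in> set p \<longrightarrow> a \<in> Sig)"

definition subst_app :: "(nat \<Rightarrow> 'a list) \<Rightarrow> (nat + 'a) list \<Rightarrow> 'a list" where
  "subst_app h p = concat (map (case_sum h (\<lambda>a. [a])) p)"

text \<open>Erasing pattern language.\<close>
definition lang :: "'a set \<Rightarrow> (nat + 'a) list \<Rightarrow> 'a list set" where
  "lang Sig p = {subst_app h p | h. \<forall>x. h x \<in> lists Sig}"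

definition quasi_regular :: "nat \<Rightarrow> (nat + 'a) list \<Rightarrow> bool" where
  "quasi_regular m p \<longleftrightarrow> (\<forall>x. Inl x \<in> set p \<longrightarrow> count_list p (Inl x) = m)"

text \<open>The class QR of m-quasi-regular patterns, with patterns of equal languages
  identified: represented as the set of their languages.\<close>
definition QR_class :: "'a set \<Rightarrow> nat \<Rightarrow> 'a list set set" where
  "QR_class Sig m = {lang Sig p | p. is_pattern Sig p \<and> quasi_regular m p}"

definition consistent :: "'a set \<Rightarrow> ('a list \<times> bool) set \<Rightarrow> 'a list set \<Rightarrow> bool" where
  "consistent Sig T L \<longleftrightarrow> T \<subseteq> lists Sig \<times> UNIV \<and> (\<forall>(w, b) \<in> T. (w \<in> L) = b)"

definition teaching_set ::
  "'a set \<Rightarrow> 'a list set set \<Rightarrow> 'a list set \<Rightarrow> ('a list \<times> bool) set \<Rightarrow> bool" where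
  "teaching_set Sig C L T \<longleftrightarrow> consistent Sig T L \<and> (\<forall>L' \<in> C. consistent Sig T L' \<longrightarrow> L' = L)"

text \<open>Minimum size of a teaching set (infinity if none exists / only infinite ones).\<close>
definition TD :: "'a set \<Rightarrow> 'a list set set \<Rightarrow> 'a list set \<Rightarrow> enat" where
  "TD Sig C L = (INF T \<in> {T. teaching_set Sig C L T}. if finite T then enat (card T) else \<infinity>)"

definition strict_po_on :: "'b set \<Rightarrow> ('b \<Rightarrow> 'b \<Rightarrow> bool) \<Rightarrow> bool" where
  "strict_po_on C R \<longleftrightarrow> (\<forall>x\<in>C. \<not> R x x) \<and> (\<forall>x\<in>C. \<forall>y\<in>C. \<forall>z\<in>C. R x y \<longrightarrow> R y z \<longrightarrow> R x z)"

definition PBTD_ord :: "'a set \<Rightarrow> 'a list set set \<Rightarrow> ('a list set \<Rightarrow> 'a list set \<Rightarrow> bool) \<Rightarrow> enat" where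
  "PBTD_ord Sig C R = (SUP L \<in> C. TD Sig (C - {L'. R L' L}) L)"

definition PBTD :: "'a set \<Rightarrow> 'a list set set \<Rightarrow> enat" where
  "PBTD Sig C = (INF R \<in> {R. strict_po_on C R}. PBTD_ord Sig C R)"

end

theory Submission
  imports Defs
begin

text \<open>Suppose a strict order admitted teaching sets of size at most one, i.e. a
  word w(L) for every L such that each L' \<noteq> L agreeing with L on w(L) precedes L. If for
  distinct words u, v neither w({u}) nor w({v}) lay in {u, v}, then {u} and {v} would precede
  each other; so the map u \<mapsto> w({u}) hits every pair of words with w({u}) \<noteq> u, and there are
  only finitely many such words. Take K = L(a^n x^m) with n exceeding all their lengths, and
  u \<in> K with w(K) \<in> {u} \<longleftrightarrow> w(K) \<in> K: then {u} precedes K, and since w({u}) = u, also K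
  precedes {u}.

  Upper bound over a unary alphabet {a}: put infinite languages before finite ones, and larger
  infinite languages before smaller ones. A finite language is a singleton {w}, taught by w; an
  infinite one is a progression {a^(k+mj) | j \<ge> 0}, taught by a^k and a^(k+m).\<close>

section \<open>Pattern languages\<close>

lemma count_list_replicate: "count_list (replicate k x) y = (if x = y then k else 0)"
  by (induction k) auto

lemma subst_app_Nil [simp]: "subst_app h [] = []"
  by (simp add: subst_app_def)

lemma subst_app_Cons [simp]: "subst_app h (e # p) = case_sum h (\<lambda>a. [a]) e @ subst_app h p"
  by (simp add: subst_app_def)

lemma subst_app_append [simp]: "subst_app h (p @ q) = subst_app h p @ subst_app h q"
  by (simp add: subst_app_def)

lemma subst_app_map_Inr [simp]: "subst_app h (map Inr u) = u"
  by (induction u) auto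

lemma subst_app_replicate_Inl [simp]:
  "subst_app h (replicate k (Inl x)) = concat (replicate k (h x))"
  by (induction k) auto

lemma subst_app_replicate_Inr [simp]: "subst_app h (replicate k (Inr a)) = replicate k a"
  by (induction k) auto

lemma subst_app_no_vars: "(\<And>x. Inl x \<notin> set p) \<Longrightarrow> subst_app h p = subst_app g p"
  by (induction p) (auto split: sum.splits)

lemma subst_app_in_lists:
  assumes "\<forall>x. h x \<in> lists Sig" and "is_pattern Sig p"
  shows "subst_app h p \<in> lists Sig"
proof -
  have "\<forall>a. Inr a \<in> set p \<longrightarrow> a \<in> Sig" using assms(2) by (simp add: is_pattern_def)
  then show ?thesis using assms(1) by (induction p) (auto split: sum.splits)
qed

lemma langI: "\<forall>x. h x \<in> lists Sig \<Longrightarrow> subst_app h p \<in> lang Sig p"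
  unfolding lang_def by blast

lemma lang_subset_lists: "is_pattern Sig p \<Longrightarrow> lang Sig p \<subseteq> lists Sig"
  unfolding lang_def using subst_app_in_lists by blast

lemma lang_map_Inr: "lang Sig (map Inr u) = {u}"
  unfolding lang_def by (auto intro!: exI[of _ "\<lambda>_. []"])

lemma lang_no_vars: "(\<And>x. Inl x \<notin> set p) \<Longrightarrow> lang Sig p = {subst_app (\<lambda>_. []) p}"
  unfolding lang_def by (auto intro!: exI[of _ "\<lambda>_. []"] subst_app_no_vars)

lemma length_le_subst_app: "Inl x \<in> set p \<Longrightarrow> length (h x) \<le> length (subst_app h p)"
  by (induction p) auto

lemma infinite_lang_if_var:
  assumes "Inl x \<in> set p" and "a \<in> Sig"
  shows "infinite (lang Sig p)"
proof
  assume "finite (lang Sig p)"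
  then obtain N where N: "\<forall>w\<in>lang Sig p. length w \<le> N"
    by (meson finite_imageI finite_nat_set_iff_bounded_le image_eqI)
  have "subst_app (\<lambda>_. replicate (Suc N) a) p \<in> lang Sig p"
    using assms(2) by (intro langI) (simp add: in_lists_conv_set)
  with N length_le_subst_app[OF assms(1), of "\<lambda>_. replicate (Suc N) a"] show False
    by fastforce
qed

lemma finite_lang_singleton:
  assumes "finite (lang Sig p)" and "Sig \<noteq> {}"
  obtains w where "lang Sig p = {w}"
proof -
  obtain a where "a \<in> Sig" using assms(2) by blast
  then have "Inl x \<notin> set p" for x using assms(1) infinite_lang_if_var[of x p a Sig] by blast
  then have "lang Sig p = {subst_app (\<lambda>_. []) p}" by (rule lang_no_vars)
  then show thesis by (rule that)
qed

lemma singleton_in_QR_class: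
  assumes "u \<noteq> []" and "u \<in> lists Sig"
  shows "{u} \<in> QR_class Sig m"
proof -
  have "is_pattern Sig (map Inr u)" and "quasi_regular m (map Inr u)"
    using assms by (auto simp: is_pattern_def quasi_regular_def)
  then have "lang Sig (map Inr u) \<in> QR_class Sig m" unfolding QR_class_def by blast
  then show ?thesis by (simp only: lang_map_Inr)
qed

lemma QR_class_subset_lists: "L \<in> QR_class Sig m \<Longrightarrow> L \<subseteq> lists Sig"
  unfolding QR_class_def using lang_subset_lists by blast

lemma finite_QR_class_singleton:
  assumes "L \<in> QR_class Sig m" and "finite L" and "Sig \<noteq> {}"
  obtains w where "L = {w}"
proof -
  from assms(1) obtain p where "L = lang Sig p" unfolding QR_class_def by blast
  with assms(2,3) finite_lang_singleton that show thesis by blast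
qed

lemma length_subst_app:
  "length (subst_app h p)
    = length (subst_app (\<lambda>_. []) p) + sum_list (map (case_sum (\<lambda>x. length (h x)) (\<lambda>_. 0)) p)"
  by (induction p) (auto split: sum.splits)

lemma length_subst_app_quasi_regular:
  assumes "quasi_regular m p"
  shows "length (subst_app h p)
    = length (subst_app (\<lambda>_. []) p) + m * (\<Sum>e\<in>set p. case_sum (\<lambda>x. length (h x)) (\<lambda>_. 0) e)"
proof -
  let ?var = "case_sum (\<lambda>x. length (h x)) (\<lambda>_. 0)"
  have "sum_list (map ?var p) = (\<Sum>e\<in>set p. count_list p e * ?var e)"
    by (rule sum_list_map_eq_sum_count)
  also have "\<dots> = (\<Sum>e\<in>set p. m * ?var e)"
  proof (rule sum.cong)
    fix e assume "e \<in> set p"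
    show "count_list p e * ?var e = m * ?var e"
    proof (cases e)
      case (Inl x)
      with \<open>e \<in> set p\<close> assms have "count_list p e = m" by (simp add: quasi_regular_def)
      then show ?thesis by simp
    qed simp
  qed simp
  finally show ?thesis by (simp add: length_subst_app[of h] sum_distrib_left)
qed

lemma unary_word: "w \<in> lists {a} \<Longrightarrow> w = replicate (length w) a"
  by (metis in_lists_conv_set replicate_length_same singletonD subsetD)

lemma lang_unary_quasi_regular:
  assumes "is_pattern {a} p" and "quasi_regular m p" and "Inl x \<in> set p"
  shows "lang {a} p = range (\<lambda>j. replicate (length (subst_app (\<lambda>_. []) p) + m * j) a)"
proof (intro equalityI subsetI)
  fix w assume w: "w \<in> lang {a} p"
  then obtain h where h: "w = subst_app h p" unfolding lang_def by blast
  have "w \<in> lists {a}" using w lang_subset_lists[OF assms(1)] by blast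
  then have "w = replicate (length w) a" by (rule unary_word)
  also have "length w = length (subst_app (\<lambda>_. []) p)
      + m * (\<Sum>e\<in>set p. case_sum (\<lambda>x. length (h x)) (\<lambda>_. 0) e)"
    unfolding h by (rule length_subst_app_quasi_regular[OF assms(2)])
  finally show "w \<in> range (\<lambda>j. replicate (length (subst_app (\<lambda>_. []) p) + m * j) a)" by blast
next
  fix w assume "w \<in> range (\<lambda>j. replicate (length (subst_app (\<lambda>_. []) p) + m * j) a)"
  then obtain j where w: "w = replicate (length (subst_app (\<lambda>_. []) p) + m * j) a" by blast
  define h where "h y = (if y = x then replicate j a else [])" for y
  have h: "\<forall>y. h y \<in> lists {a}" by (simp add: h_def in_lists_conv_set)
  have "(\<Sum>e\<in>set p. case_sum (\<lambda>y. length (h y)) (\<lambda>_. 0) e) = (\<Sum>e\<in>set p. if e = Inl x then j else 0)"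
    by (intro sum.cong) (auto simp: h_def split: sum.splits)
  also have "\<dots> = j" using assms(3) by simp
  finally have "length (subst_app h p) = length w"
    using length_subst_app_quasi_regular[OF assms(2), of h] w by simp
  moreover have "subst_app h p = replicate (length (subst_app h p)) a"
    using subst_app_in_lists[OF h assms(1)] by (rule unary_word)
  ultimately have "subst_app h p = w" using w by simp
  then show "w \<in> lang {a} p" using langI[OF h] by blast
qed

section \<open>Teaching by a single word\<close>

definition teaching_word :: "'b set set \<Rightarrow> ('b set \<Rightarrow> 'b set \<Rightarrow> bool) \<Rightarrow> 'b set \<Rightarrow> 'b \<Rightarrow> bool" where
  "teaching_word C R L w \<longleftrightarrow> (\<forall>L'\<in>C. L' \<noteq> L \<longrightarrow> (w \<in> L') = (w \<in> L) \<longrightarrow> R L' L)"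

lemma consistent_empty [simp]: "consistent Sig {} L"
  by (simp add: consistent_def)

lemma consistent_insert [simp]:
  "consistent Sig (insert (w, b) T) L \<longleftrightarrow> w \<in> lists Sig \<and> (w \<in> L) = b \<and> consistent Sig T L"
  by (auto simp: consistent_def)

lemma TD_le_card:
  assumes "teaching_set Sig D L T" and "finite T" and "card T \<le> n"
  shows "TD Sig D L \<le> of_nat n"
  unfolding TD_def using assms by (intro INF_lower2[of T]) (auto simp: of_nat_eq_enat)

lemma TD_less_2_imp_teaching_word:
  assumes "TD Sig (C - {L'. R L' L}) L < 2"
  obtains w where "teaching_word C R L w"
proof -
  obtain T where T: "teaching_set Sig (C - {L'. R L' L}) L T"
    and size: "(if finite T then enat (card T) else \<infinity>) < 2"
    using assms unfolding TD_def INF_less_iff by blast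
  from size have "finite T" and "card T \<le> Suc 0" by (auto split: if_splits simp: numeral_eq_enat)
  then have "\<forall>x\<in>T. \<forall>y\<in>T. x = y" by (simp add: card_le_Suc0_iff_eq)
  then obtain t where t: "T \<subseteq> {t}" by (cases "T = {}") auto
  from T have cons: "consistent Sig T L"
    and unique: "\<And>L'. L' \<in> C - {L'. R L' L} \<Longrightarrow> consistent Sig T L' \<Longrightarrow> L' = L"
    unfolding teaching_set_def by blast+
  have "teaching_word C R L (fst t)"
    unfolding teaching_word_def
  proof (intro ballI impI)
    fix L' assume "L' \<in> C" "L' \<noteq> L" and agree: "(fst t \<in> L') = (fst t \<in> L)"
    have "consistent Sig T L'"
      using cons t agree unfolding consistent_def by fastforce
    with unique \<open>L' \<in> C\<close> \<open>L' \<noteq> L\<close> show "R L' L" by blast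
  qed
  then show thesis by (rule that)
qed

lemma two_le_PBTD:
  assumes "\<And>R. strict_po_on C R \<Longrightarrow> \<not> (\<forall>L\<in>C. \<exists>w. teaching_word C R L w)"
  shows "2 \<le> PBTD Sig C"
  unfolding PBTD_def
proof (rule INF_greatest)
  fix R assume "R \<in> {R. strict_po_on C R}"
  with assms obtain L where L: "L \<in> C" and "\<nexists>w. teaching_word C R L w" by blast
  then have "2 \<le> TD Sig (C - {L'. R L' L}) L"
    using TD_less_2_imp_teaching_word by (metis not_le)
  also have "\<dots> \<le> PBTD_ord Sig C R"
    unfolding PBTD_ord_def using L by (rule SUP_upper)
  finally show "2 \<le> PBTD_ord Sig C R" .
qed

lemma strict_po_on_asym:
  "strict_po_on C R \<Longrightarrow> x \<in> C \<Longrightarrow> y \<in> C \<Longrightarrow> R x y \<Longrightarrow> \<not> R y x"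
  unfolding strict_po_on_def by blast

lemma finite_if_pairs_hit_choice:
  assumes "\<And>u v. u \<in> B \<Longrightarrow> v \<in> B \<Longrightarrow> u \<noteq> v \<Longrightarrow> u = f v \<or> v = f u"
  shows "finite B"
proof (cases "B = {}")
  case False
  then obtain b where b: "b \<in> B" by blast
  let ?S = "B - {b, f b}"
  have "f u = b" if "u \<in> ?S" for u using assms[of u b] that b by auto
  then have unique: "u = v" if "u \<in> ?S" "v \<in> ?S" for u v
    using assms[of u v] that by auto
  have "finite ?S"
  proof (cases "?S = {}")
    case False
    then obtain u where "u \<in> ?S" by blast
    with unique have "?S \<subseteq> {u}" by blast
    then show ?thesis by (rule finite_subset) simp
  qed (simp only: finite.emptyI)
  then show ?thesis by (simp add: finite_Diff2)
qed simp

lemma finite_not_self_teaching: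
  assumes po: "strict_po_on C R" and sing: "\<forall>u\<in>U. {u} \<in> C"
    and wit: "\<forall>L\<in>C. \<exists>w. teaching_word C R L w"
  shows "finite {u\<in>U. \<not> teaching_word C R {u} u}"
proof -
  obtain t where t: "\<And>L. L \<in> C \<Longrightarrow> teaching_word C R L (t L)" using wit by metis
  have precedes: "R {u} {v}" if "u \<in> U" "v \<in> U" "u \<noteq> v" "t {v} \<noteq> u" "t {v} \<noteq> v" for u v
    using t[of "{v}"] sing that unfolding teaching_word_def by simp
  show ?thesis
  proof (rule finite_if_pairs_hit_choice[where f = "\<lambda>u. t {u}"])
    fix u v assume u: "u \<in> {u\<in>U. \<not> teaching_word C R {u} u}"
      and v: "v \<in> {u\<in>U. \<not> teaching_word C R {u} u}" and "u \<noteq> v"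
    then have "t {u} \<noteq> u" "t {v} \<noteq> v" using t[of "{u}"] t[of "{v}"] sing by auto
    show "u = t {v} \<or> v = t {u}"
    proof (rule ccontr)
      assume "\<not> (u = t {v} \<or> v = t {u})"
      then have "R {u} {v}" and "R {v} {u}"
        using precedes u v \<open>u \<noteq> v\<close> \<open>t {u} \<noteq> u\<close> \<open>t {v} \<noteq> v\<close> by auto
      with strict_po_on_asym[OF po] sing u v show False by blast
    qed
  qed
qed

lemma not_all_teaching_words:
  assumes po: "strict_po_on C R" and sing: "\<forall>u\<in>U. {u} \<in> C"
    and spread: "\<And>N. finite N \<Longrightarrow> \<exists>K\<in>C. K \<subseteq> U - N \<and> (\<exists>u v. u \<in> K \<and> v \<in> K \<and> u \<noteq> v)"
  shows "\<not> (\<forall>L\<in>C. \<exists>w. teaching_word C R L w)"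
proof
  assume wit: "\<forall>L\<in>C. \<exists>w. teaching_word C R L w"
  obtain K u\<^sub>1 u\<^sub>2 where K: "K \<in> C" "K \<subseteq> U - {u\<in>U. \<not> teaching_word C R {u} u}"
    and two: "u\<^sub>1 \<in> K" "u\<^sub>2 \<in> K" "u\<^sub>1 \<noteq> u\<^sub>2"
    using spread[OF finite_not_self_teaching[OF po sing wit]] by blast
  from wit K(1) obtain w where w: "teaching_word C R K w" by blast
  obtain u where u: "u \<in> K" and agree: "(w \<in> {u}) = (w \<in> K)"
  proof (cases "w \<in> K")
    case True
    then show thesis using that[of w] by simp
  next
    case False
    then show thesis using that[of u\<^sub>1] two(1) by auto
  qed
  have "{u} \<noteq> K" using two by auto
  have "u \<in> U" and self: "teaching_word C R {u} u" using K(2) u by auto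
  have "R {u} K"
    using w sing \<open>u \<in> U\<close> \<open>{u} \<noteq> K\<close> agree unfolding teaching_word_def by simp
  moreover have "R K {u}"
    using self K(1) u \<open>{u} \<noteq> K\<close> unfolding teaching_word_def by auto
  ultimately show False using strict_po_on_asym[OF po] K(1) sing \<open>u \<in> U\<close> by blast
qed

section \<open>The lower bound\<close>

lemma QR_class_spread:
  assumes "a \<in> Sig" and "m \<ge> 1" and "finite N"
  shows "\<exists>K\<in>QR_class Sig m. K \<subseteq> (lists Sig - {[]}) - N \<and> (\<exists>u v. u \<in> K \<and> v \<in> K \<and> u \<noteq> v)"
proof -
  obtain n where n: "\<forall>w\<in>insert [] N. length w < n"
    using \<open>finite N\<close> by (metis finite_insert finite_imageI finite_nat_set_iff_bounded imageI)
  define p where "p = replicate n (Inr a) @ replicate m (Inl (0::nat))"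
  have pat: "is_pattern Sig p" using assms(1,2) by (auto simp: p_def is_pattern_def)
  have "quasi_regular m p" by (auto simp: p_def quasi_regular_def count_list_replicate)
  with pat have "lang Sig p \<in> QR_class Sig m" unfolding QR_class_def by blast
  moreover have "lang Sig p \<subseteq> (lists Sig - {[]}) - N"
  proof
    fix w assume w: "w \<in> lang Sig p"
    then obtain h where "w = subst_app h p" unfolding lang_def by blast
    then have "n \<le> length w" by (simp add: p_def)
    with n w lang_subset_lists[OF pat] show "w \<in> (lists Sig - {[]}) - N" by fastforce
  qed
  moreover have "replicate n a \<in> lang Sig p"
    using langI[of "\<lambda>_. []" Sig p] by (simp add: p_def)
  moreover have "replicate (n + m) a \<in> lang Sig p"
    using langI[of "\<lambda>_. [a]" Sig p] assms(1)
    by (simp add: p_def replicate_add concat_replicate_single)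
  moreover have "replicate n a \<noteq> replicate (n + m) a"
    using assms(2) arg_cong[of _ _ length] by fastforce
  ultimately show ?thesis by blast
qed

lemma two_le_PBTD_QR_class:
  assumes "a \<in> Sig" and "m \<ge> 1"
  shows "2 \<le> PBTD Sig (QR_class Sig m)"
proof (rule two_le_PBTD)
  fix R assume "strict_po_on (QR_class Sig m) R"
  then show "\<not> (\<forall>L\<in>QR_class Sig m. \<exists>w. teaching_word (QR_class Sig m) R L w)"
  proof (rule not_all_teaching_words[where U = "lists Sig - {[]}"])
    show "\<forall>u\<in>lists Sig - {[]}. {u} \<in> QR_class Sig m" by (simp add: singleton_in_QR_class)
  qed (rule QR_class_spread[OF assms])
qed

section \<open>The upper bound for a unary alphabet\<close>

definition infinite_first :: "'b set \<Rightarrow> 'b set \<Rightarrow> bool" where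
  "infinite_first L' L \<longleftrightarrow> infinite L' \<and> (finite L \<or> L \<subset> L')"

lemma strict_po_on_infinite_first: "strict_po_on C infinite_first"
  unfolding strict_po_on_def infinite_first_def by auto

lemma TD_finite_QR_class_le_1:
  assumes "Sig \<noteq> {}" and "L \<in> QR_class Sig m" and "finite L"
  shows "TD Sig (QR_class Sig m - {L'. infinite_first L' L}) L \<le> 1"
proof -
  obtain w where Lw: "L = {w}" using finite_QR_class_singleton assms by blast
  have "w \<in> lists Sig" using QR_class_subset_lists[OF assms(2)] Lw by blast
  have "teaching_set Sig (QR_class Sig m - {L'. infinite_first L' L}) L {(w, True)}"
    unfolding teaching_set_def
  proof (intro conjI ballI impI)
    show "consistent Sig {(w, True)} L" using \<open>w \<in> lists Sig\<close> Lw by simp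
    fix L' assume L': "L' \<in> QR_class Sig m - {L'. infinite_first L' L}"
      and "consistent Sig {(w, True)} L'"
    then have "w \<in> L'" and "finite L'" using assms(3) by (auto simp: infinite_first_def)
    moreover obtain w' where "L' = {w'}"
      using finite_QR_class_singleton L' \<open>finite L'\<close> assms(1) by blast
    ultimately show "L' = L" using Lw by simp
  qed
  then show ?thesis using TD_le_card[of _ _ _ _ 1] by fastforce
qed

lemma infinite_unary_QR_class:
  assumes "L \<in> QR_class {a} m" and "infinite L"
  obtains k where "L = range (\<lambda>j. replicate (k + m * j) a)"
proof -
  obtain p where p: "is_pattern {a} p" "quasi_regular m p" "L = lang {a} p"
    using assms(1) unfolding QR_class_def by blast
  have "\<exists>x. Inl x \<in> set p"
  proof (rule ccontr)
    assume "\<nexists>x. Inl x \<in> set p"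
    then have "L = {subst_app (\<lambda>_. []) p}" unfolding p(3) by (simp add: lang_no_vars)
    with assms(2) show False by simp
  qed
  then obtain x where "Inl x \<in> set p" by blast
  then have "L = range (\<lambda>j. replicate (length (subst_app (\<lambda>_. []) p) + m * j) a)"
    unfolding p(3) by (rule lang_unary_quasi_regular[OF p(1,2)])
  then show thesis by (rule that)
qed

lemma TD_infinite_unary_QR_class_le_2:
  assumes "m \<ge> 1" and "L \<in> QR_class {a} m" and "infinite L"
  shows "TD {a} (QR_class {a} m - {L'. infinite_first L' L}) L \<le> 2"
proof -
  obtain k where Lk: "L = range (\<lambda>j. replicate (k + m * j) a)"
    using assms(2,3) by (rule infinite_unary_QR_class)
  let ?T = "{(replicate k a, True), (replicate (k + m) a, True)}"
  have shortest: "replicate k a \<in> L" "replicate (k + m) a \<in> L"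
    unfolding Lk using rangeI[of "\<lambda>j. replicate (k + m * j) a" 0]
      rangeI[of "\<lambda>j. replicate (k + m * j) a" 1] by simp_all
  have "teaching_set {a} (QR_class {a} m - {L'. infinite_first L' L}) L ?T"
    unfolding teaching_set_def
  proof (intro conjI ballI impI)
    show "consistent {a} ?T L" using shortest by (simp add: in_lists_conv_set)
    fix L' assume L': "L' \<in> QR_class {a} m - {L'. infinite_first L' L}"
      and "consistent {a} ?T L'"
    then have in': "replicate k a \<in> L'" "replicate (k + m) a \<in> L'" by simp_all
    have "infinite L'"
    proof
      assume "finite L'"
      then obtain w' where "L' = {w'}" using finite_QR_class_singleton L' by blast
      with in' have "replicate k a = replicate (k + m) a" by simp
      then show False using assms(1) arg_cong[of _ _ length] by fastforce
    qed
    have "L' \<in> QR_class {a} m" using L' by blast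
    obtain k' where L'k': "L' = range (\<lambda>j. replicate (k' + m * j) a)"
      using \<open>L' \<in> QR_class {a} m\<close> \<open>infinite L'\<close> by (rule infinite_unary_QR_class)
    from in'(1) obtain j\<^sub>0 where "k = k' + m * j\<^sub>0"
      unfolding L'k' by (metis (no_types, lifting) imageE length_replicate)
    then have "replicate (k + m * j) a = replicate (k' + m * (j\<^sub>0 + j)) a" for j
      by (simp add: algebra_simps)
    then have "L \<subseteq> L'" unfolding Lk L'k' by auto
    moreover have "\<not> L \<subset> L'" using L' \<open>infinite L'\<close> by (simp add: infinite_first_def)
    ultimately show "L' = L" by blast
  qed
  moreover have "card ?T \<le> 2" by (simp add: card_insert_if)
  ultimately show ?thesis using TD_le_card[of _ _ _ ?T 2] by simp
qed

lemma PBTD_unary_QR_class_le_2: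
  assumes "m \<ge> 1"
  shows "PBTD {a} (QR_class {a} m) \<le> 2"
proof -
  have "PBTD {a} (QR_class {a} m) \<le> PBTD_ord {a} (QR_class {a} m) infinite_first"
    unfolding PBTD_def by (rule INF_lower) (simp add: strict_po_on_infinite_first)
  also have "\<dots> \<le> 2"
    unfolding PBTD_ord_def
  proof (rule SUP_least)
    fix L assume "L \<in> QR_class {a} m"
    then show "TD {a} (QR_class {a} m - {L'. infinite_first L' L}) L \<le> 2"
      using TD_finite_QR_class_le_1[of "{a}"] TD_infinite_unary_QR_class_le_2[OF assms]
      by (metis empty_not_insert one_le_numeral order_trans)
  qed
  finally show ?thesis .
qed

theorem mainTheorem10:
  fixes Sig :: "'a set" and m :: nat
  assumes "m \<ge> 1"
  shows "(card Sig = 1 \<longrightarrow> PBTD Sig (QR_class Sig m) = 2)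
       \<and> ((card Sig \<ge> 2 \<or> (infinite Sig \<and> countable Sig))
            \<longrightarrow> PBTD Sig (QR_class Sig m) \<ge> 2)"
proof (intro conjI impI)
  assume "card Sig = 1"
  then obtain a where "Sig = {a}" by (rule card_1_singletonE)
  moreover have "PBTD {a} (QR_class {a} m) = 2"
    using assms by (intro antisym PBTD_unary_QR_class_le_2 two_le_PBTD_QR_class) simp_all
  ultimately show "PBTD Sig (QR_class Sig m) = 2" by simp
next
  assume "card Sig \<ge> 2 \<or> (infinite Sig \<and> countable Sig)"
  then obtain a where "a \<in> Sig" by fastforce
  then show "PBTD Sig (QR_class Sig m) \<ge> 2" using assms by (rule two_le_PBTD_QR_class)
qed

end
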